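(* Let $\phi(z)\in\mathbb{R}[z]$ be a cubic polynomial with positive lead coefficient $a>0$ and at least two distinct fixed points. Denote its fixed points by $\gamma_1,\gamma_2,\gamma_3\in\mathbb{R}$ with $\gamma_1\leq\gamma_2\leq\gamma_3$. Then $\mathfrak{K}_\infty\cap\mathbb{R}\subseteq[\gamma_1,\gamma_3]$, and $$\phi^{-1}([\gamma_1,\gamma_3])\subseteq[\gamma_1,\gamma_1+a^{-1/2}]\cup[\gamma_2-a^{-1/2},\gamma_2+a^{-1/2}]\cup[\gamma_3-a^{-1/2},\gamma_3].$$
   Context: The (archimedean) filled Julia set of $\phi$ is $\mathfrak{K}_\infty=\{x\in\mathbb{C}:\{|\phi^n(x)|:n\ge0\}\text{ is bounded}\}$, where $\phi^n$ is the $n$-th iterate of $\phi$. Fixed points are listed with multiplicity as roots of $\phi(z)-z$; here $\phi^{-1}([\gamma_1,\gamma_3])$ denotes the set of real $x$ with $\phi(x)\in[\gamma_1,\gamma_3]$. *)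

theory Defs
  imports "HOL-Computational_Algebra.Polynomial" "HOL-Analysis.Analysis"
begin

definition filled_julia :: "complex poly \<Rightarrow> complex set" where
  "filled_julia p = {x. bounded (range (\<lambda>n. ((poly p) ^^ n) x))}"

end

theory Submission
  imports Defs
begin

text \<open>
  Write \<open>\<phi>(y) = y + a (y - \<gamma>\<^sub>1)(y - \<gamma>\<^sub>2)(y - \<gamma>\<^sub>3)\<close>. To the right of \<open>\<gamma>\<^sub>3\<close> the displacement
  \<open>\<phi>(y) - y\<close> is positive and increasing, so an orbit starting at \<open>x > \<gamma>\<^sub>3\<close> moves right by at
  least \<open>\<phi>(x) - x\<close> at every step and escapes; the case \<open>x < \<gamma>\<^sub>1\<close> is the mirror image under
  \<open>y \<mapsto> -y\<close>. For the preimage bound: if \<open>\<gamma>\<^sub>1 + 1/\<surd>a < x < \<gamma>\<^sub>2 - 1/\<surd>a\<close>, then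
  \<open>a (x - \<gamma>\<^sub>1)(\<gamma>\<^sub>2 - x) > 1\<close>, hence \<open>\<phi>(x) - x > \<gamma>\<^sub>3 - x\<close>, i.e. \<open>\<phi>(x) > \<gamma>\<^sub>3\<close>; symmetrically
  between \<open>\<gamma>\<^sub>2\<close> and \<open>\<gamma>\<^sub>3\<close>, and outside \<open>[\<gamma>\<^sub>1, \<gamma>\<^sub>3]\<close> the sign of the displacement decides.
\<close>

lemma poly_map_poly_of_real:
  "poly (map_poly of_real p) (of_real x) = (of_real (poly p x) :: 'a :: {real_algebra_1, comm_ring})"
  by (induction p) (auto simp: map_poly_pCons)

lemma funpow_poly_map_poly_of_real:
  "(poly (map_poly of_real p) ^^ n) (of_real x) = (of_real ((poly p ^^ n) x) :: 'a :: {real_algebra_1, comm_ring})"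
  by (induction n) (auto simp: poly_map_poly_of_real)

lemma of_real_in_filled_julia_iff:
  "complex_of_real x \<in> filled_julia (map_poly complex_of_real p) \<longleftrightarrow> bounded (range (\<lambda>n. (poly p ^^ n) x))"
  by (simp add: filled_julia_def bounded_iff funpow_poly_map_poly_of_real)

lemma funpow_uminus_conj:
  fixes g :: "'a \<Rightarrow> 'a :: group_add"
  shows "((\<lambda>y. - g (- y)) ^^ n) x = - (g ^^ n) (- x)"
  by (induction n) auto

lemma funpow_ge_linear:
  fixes g :: "real \<Rightarrow> real"
  assumes "c \<ge> 0" and step: "\<And>y. y \<ge> x \<Longrightarrow> g y \<ge> y + c"
  shows "(g ^^ n) x \<ge> x + real n * c"
proof (induction n)
  case (Suc n)
  have "(g ^^ n) x \<ge> x"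
    using Suc mult_nonneg_nonneg[of "real n" c] \<open>c \<ge> 0\<close> by linarith
  then show ?case
    using Suc step[of "(g ^^ n) x"] by (simp add: algebra_simps)
qed simp

lemma not_bounded_linear_growth:
  fixes u :: "nat \<Rightarrow> real"
  assumes "c > 0" and "\<And>n. u n \<ge> b + real n * c"
  shows "\<not> bounded (range u)"
proof
  assume "bounded (range u)"
  then obtain B where B: "\<And>n. \<bar>u n\<bar> \<le> B"
    unfolding bounded_iff by auto
  obtain n :: nat where "(B - b) / c < real n"
    using reals_Archimedean2 by blast
  with \<open>c > 0\<close> have "B < b + real n * c"
    by (simp add: field_simps)
  with B[of n] assms(2)[of n] show False
    by linarith
qed

lemma cubic_mono_right:
  fixes \<gamma>1 \<gamma>2 \<gamma>3 :: real
  assumes "\<gamma>1 \<le> \<gamma>3" "\<gamma>2 \<le> \<gamma>3" "\<gamma>3 \<le> x" "x \<le> y"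
  shows "(x - \<gamma>1) * (x - \<gamma>2) * (x - \<gamma>3) \<le> (y - \<gamma>1) * (y - \<gamma>2) * (y - \<gamma>3)"
  using assms by (intro mult_mono) auto

lemma cubic_orbit_escapes_right:
  fixes g :: "real \<Rightarrow> real" and a \<gamma>1 \<gamma>2 \<gamma>3 :: real
  assumes g: "\<And>y. g y = y + a * ((y - \<gamma>1) * (y - \<gamma>2) * (y - \<gamma>3))"
    and "a > 0" "\<gamma>1 \<le> \<gamma>3" "\<gamma>2 \<le> \<gamma>3" "x > \<gamma>3"
  shows "\<not> bounded (range (\<lambda>n. (g ^^ n) x))"
proof -
  define c where "c = a * ((x - \<gamma>1) * (x - \<gamma>2) * (x - \<gamma>3))"
  have "c > 0"
    using assms by (simp add: c_def)
  have "g y \<ge> y + c" if "y \<ge> x" for y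
    using cubic_mono_right[of \<gamma>1 \<gamma>3 \<gamma>2 x y] that assms by (simp add: g c_def)
  then show ?thesis
    using \<open>c > 0\<close> by (intro not_bounded_linear_growth[where c = c and b = x] funpow_ge_linear) auto
qed

lemma cubic_bounded_orbit_between_fixed_points:
  fixes g :: "real \<Rightarrow> real" and a \<gamma>1 \<gamma>2 \<gamma>3 :: real
  assumes g: "\<And>y. g y = y + a * ((y - \<gamma>1) * (y - \<gamma>2) * (y - \<gamma>3))"
    and "a > 0" "\<gamma>1 \<le> \<gamma>2" "\<gamma>2 \<le> \<gamma>3"
    and bounded: "bounded (range (\<lambda>n. (g ^^ n) x))"
  shows "x \<in> {\<gamma>1..\<gamma>3}"
proof (rule ccontr)
  assume "x \<notin> {\<gamma>1..\<gamma>3}"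
  then consider "x > \<gamma>3" | "x < \<gamma>1"
    by fastforce
  then show False
  proof cases
    case 1
    with cubic_orbit_escapes_right[OF g] assms show False
      by (meson order.trans)
  next
    case 2
    \<comment> \<open>\<open>y \<mapsto> -g(-y)\<close> is the same kind of map, with fixed points \<open>-\<gamma>\<^sub>3 \<le> -\<gamma>\<^sub>2 \<le> -\<gamma>\<^sub>1\<close>.\<close>
    have "- g (- y) = y + a * ((y - - \<gamma>3) * (y - - \<gamma>2) * (y - - \<gamma>1))" for y
      by (simp add: g algebra_simps)
    from cubic_orbit_escapes_right[OF this \<open>a > 0\<close>, of "- x"] 2 \<open>\<gamma>1 \<le> \<gamma>2\<close> \<open>\<gamma>2 \<le> \<gamma>3\<close>
    have "\<not> bounded (uminus ` range (\<lambda>n. (g ^^ n) x))"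
      by (simp add: funpow_uminus_conj image_image)
    with bounded show False
      by simp
  qed
qed

lemma cubic_preimage_of_fixed_point_interval:
  fixes g :: "real \<Rightarrow> real" and a \<gamma>1 \<gamma>2 \<gamma>3 d :: real
  assumes g: "\<And>y. g y = y + a * ((y - \<gamma>1) * (y - \<gamma>2) * (y - \<gamma>3))"
    and "a > 0" "\<gamma>1 \<le> \<gamma>2" "\<gamma>2 \<le> \<gamma>3"
    and d: "d \<ge> 0" "a * d\<^sup>2 = 1"
    and gx: "g x \<in> {\<gamma>1..\<gamma>3}"
  shows "x \<in> {\<gamma>1..\<gamma>1 + d} \<union> {\<gamma>2 - d..\<gamma>2 + d} \<union> {\<gamma>3 - d..\<gamma>3}"
proof (rule ccontr)
  assume "\<not> ?thesis"
  moreover have "x \<ge> \<gamma>1"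
  proof (rule ccontr)
    assume "\<not> x \<ge> \<gamma>1"
    then have "a * ((x - \<gamma>1) * (x - \<gamma>2) * (x - \<gamma>3)) < 0"
      using assms by (simp add: mult_pos_neg mult_neg_neg mult_neg_pos)
    with gx g[of x] \<open>\<not> x \<ge> \<gamma>1\<close> show False
      by simp
  qed
  moreover have "x \<le> \<gamma>3"
  proof (rule ccontr)
    assume "\<not> x \<le> \<gamma>3"
    then have "a * ((x - \<gamma>1) * (x - \<gamma>2) * (x - \<gamma>3)) > 0"
      using assms by simp
    with gx g[of x] \<open>\<not> x \<le> \<gamma>3\<close> show False
      by simp
  qed
  ultimately have out: "\<gamma>1 + d < x" "x < \<gamma>3 - d" and "x < \<gamma>2 - d \<or> \<gamma>2 + d < x"
    by auto
  then consider "x < \<gamma>2 - d" | "\<gamma>2 + d < x"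
    by blast
  then show False
  proof cases
    case 1
    have "d * d < (x - \<gamma>1) * (\<gamma>2 - x)"
      using out 1 d by (intro mult_strict_mono) auto
    then have "a * (d * d) * (\<gamma>3 - x) < a * ((x - \<gamma>1) * (\<gamma>2 - x)) * (\<gamma>3 - x)"
      using assms out by (intro mult_strict_right_mono) auto
    then have "\<gamma>3 - x < a * ((x - \<gamma>1) * (\<gamma>2 - x)) * (\<gamma>3 - x)"
      using d by (simp add: power2_eq_square)
    then have "g x > \<gamma>3"
      by (simp add: g algebra_simps)
    with gx show False
      by simp
  next
    case 2
    have "d * d < (x - \<gamma>2) * (\<gamma>3 - x)"
      using out 2 d by (intro mult_strict_mono) auto
    then have "a * (d * d) * (x - \<gamma>1) < a * ((x - \<gamma>2) * (\<gamma>3 - x)) * (x - \<gamma>1)"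
      using assms out by (intro mult_strict_right_mono) auto
    then have "x - \<gamma>1 < a * ((x - \<gamma>2) * (\<gamma>3 - x)) * (x - \<gamma>1)"
      using d by (simp add: power2_eq_square)
    then have "g x < \<gamma>1"
      by (simp add: g algebra_simps)
    with gx show False
      by simp
  qed
qed

theorem lemma4p10:
  fixes \<phi> :: "real poly" and a \<gamma>1 \<gamma>2 \<gamma>3 :: real
  assumes deg: "degree \<phi> = 3"
    and lc: "lead_coeff \<phi> = a" and apos: "a > 0"
    and fixpts: "\<phi> - [:0, 1:] = smult a ([:-\<gamma>1, 1:] * [:-\<gamma>2, 1:] * [:-\<gamma>3, 1:])"
    and ord: "\<gamma>1 \<le> \<gamma>2" "\<gamma>2 \<le> \<gamma>3"
    and two_distinct: "\<gamma>1 < \<gamma>3"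
  shows "{x::real. complex_of_real x \<in> filled_julia (map_poly complex_of_real \<phi>)} \<subseteq> {\<gamma>1..\<gamma>3} \<and>
         {x::real. poly \<phi> x \<in> {\<gamma>1..\<gamma>3}} \<subseteq>
           {\<gamma>1..\<gamma>1 + 1 / sqrt a} \<union> {\<gamma>2 - 1 / sqrt a..\<gamma>2 + 1 / sqrt a} \<union> {\<gamma>3 - 1 / sqrt a..\<gamma>3}"
proof -
  have \<phi>: "poly \<phi> y = y + a * ((y - \<gamma>1) * (y - \<gamma>2) * (y - \<gamma>3))" for y
  proof -
    have "poly (\<phi> - [:0, 1:]) y = poly (smult a ([:-\<gamma>1, 1:] * [:-\<gamma>2, 1:] * [:-\<gamma>3, 1:])) y"
      using fixpts by simp
    then show ?thesis
      by (simp add: algebra_simps)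
  qed
  have d: "1 / sqrt a \<ge> 0" "a * (1 / sqrt a)\<^sup>2 = 1"
    using apos by (simp_all add: power_divide)
  show ?thesis
  proof
    show "{x. complex_of_real x \<in> filled_julia (map_poly complex_of_real \<phi>)} \<subseteq> {\<gamma>1..\<gamma>3}"
      using cubic_bounded_orbit_between_fixed_points[OF \<phi> apos ord]
      by (auto simp: of_real_in_filled_julia_iff)
    show "{x. poly \<phi> x \<in> {\<gamma>1..\<gamma>3}} \<subseteq>
        {\<gamma>1..\<gamma>1 + 1 / sqrt a} \<union> {\<gamma>2 - 1 / sqrt a..\<gamma>2 + 1 / sqrt a} \<union> {\<gamma>3 - 1 / sqrt a..\<gamma>3}"
      using cubic_preimage_of_fixed_point_interval[OF \<phi> apos ord d] by blast
  qed
qed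

end
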